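(* Let $M>1$, $q>0$ and $n>-2$ be real parameters, and define the sets \[ \begin{aligned} A&=\{s\in\mathbb{R}: |s-(n-s)|\le q,\ 0\le s\le M,\ 0\le n-s\le M\},\\ B&=\{s\in\mathbb{R}: |s-(n+1-s)|\le q,\ 0\le s\le M,\ 0\le n+1-s\le M\},\\ C&=\{s\in\mathbb{R}: |s-(n-s)|\le q,\ 0\le s+1\le M,\ 0\le n+1-s\le M\}. \end{aligned} \] Then \[ \int_{A}\binom{M-1}{s}\binom{M-1}{n-s}ds\ \ge\ \int_{A}\binom{M}{s}\binom{M-2}{n-s}ds, \] \[ \int_{B}\binom{M-1}{s}\binom{M-1}{n-s}ds\ \le\ \int_{B}\binom{M}{s}\binom{M-2}{n-s}ds, \] \[ \int_{C}\binom{M-1}{s}\binom{M-1}{n-s}ds\ \ge\ \int_{C}\binom{M}{s+1}\binom{M-2}{n-s-1}ds. \]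
   Context: For real $a>-1$ and real $s$, the generalized binomial coefficient is $\binom{a}{s}=\Gamma(a+1)\cdot\frac{1}{\Gamma(s+1)}\cdot\frac{1}{\Gamma(a-s+1)}$, where $\Gamma$ is the Gamma function and $1/\Gamma$ is understood as the entire function (equal to $0$ at the poles of $\Gamma$, i.e. at non-positive integers). *)

theory Defs
  imports "HOL-Analysis.Analysis"
begin

text \<open>Generalized binomial coefficient for real a > -1 and real s:
  Gamma(a+1) * (1/Gamma)(s+1) * (1/Gamma)(a-s+1), with 1/Gamma the entire
  reciprocal Gamma function rGamma (zero at non-positive integers).\<close>
definition rbinom :: "real \<Rightarrow> real \<Rightarrow> real" where
  "rbinom a s = Gamma (a + 1) * rGamma (s + 1) * rGamma (a - s + 1)"

end

theory Submission
  imports Defs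
begin

text \<open>By Pascal's rule each difference of the two integrands is a backward difference
  \<open>h s - h (s - 1)\<close> of a product \<open>h\<close> of two binomial coefficients, so its integral over
  \<open>[a, b]\<close> telescopes. Since the intervals are centred, reflecting the boundary term at
  \<open>a\<close> onto the one at \<open>b\<close> leaves the integral of \<open>h t - h (a + b - 1 - t)\<close> over the
  upper part of \<open>[b - 1, b]\<close>. Written with the reciprocal Gamma function this difference
  factors into nonnegative Gamma values times a linear factor of fixed sign there.\<close>

lemma continuous_on_rbinom [continuous_intros]:
  "continuous_on S f \<Longrightarrow> continuous_on S (\<lambda>s. rbinom a (f s))"
  unfolding rbinom_def
  by (intro continuous_intros continuous_on_compose2[OF continuous_on_rGamma[of UNIV]]) auto

lemma integrable_on_interval_if_continuous:
  fixes h :: "real \<Rightarrow> real"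
  shows "continuous_on UNIV h \<Longrightarrow> h integrable_on {a..b}"
  by (rule integrable_continuous_interval) (rule continuous_on_subset, auto)

lemma integral_reflect_shift_real:
  fixes h :: "real \<Rightarrow> real"
  shows "integral {a..b} (\<lambda>t. h (c - t)) = integral {c - b..c - a} h"
  using integral_shift_real_ivl[of "c - b" c "c - a" h]
    Henstock_Kurzweil_Integration.integral_reflect_real[where a = "-b" and b = "-a" and f = "\<lambda>y. h (c + y)"]
  by (simp add: add.commute)

lemma integral_telescoping_reflect:
  fixes h :: "real \<Rightarrow> real"
  assumes cont: "continuous_on UNIV h" and "a \<le> b"
  shows "integral {a..b} (\<lambda>s. h s - h (s - 1))
       = integral {max a (b - 1)..b} (\<lambda>t. h t - h (a + b - 1 - t))"
proof -
  have int: "h integrable_on {x..y}" for x y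
    using cont by (rule integrable_on_interval_if_continuous)
  have int_shifted: "(\<lambda>s. h (s - 1)) integrable_on {a..b}"
    by (rule integrable_on_interval_if_continuous, rule continuous_on_compose2[OF cont])
      (auto intro: continuous_intros)
  have int_reflected: "(\<lambda>t. h (a + b - 1 - t)) integrable_on {x..y}" for x y
    by (rule integrable_on_interval_if_continuous, rule continuous_on_compose2[OF cont])
      (auto intro: continuous_intros)
  have shift: "integral {a..b} (\<lambda>s. h (s - 1)) = integral {a - 1..b - 1} h"
    using integral_shift_real_ivl[of "a - 1" "-1" "b - 1" h] by simp
  have "integral {a..b} (\<lambda>s. h s - h (s - 1)) = integral {a..b} h - integral {a - 1..b - 1} h"
    using int int_shifted by (simp add: integral_diff shift)
  also have "\<dots> = integral {max a (b - 1)..b} h - integral {a - 1..a + b - 1 - max a (b - 1)} h"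
  proof (cases "a \<le> b - 1")
    case True
    have "integral {a..b - 1} h + integral {b - 1..b} h = integral {a..b} h"
      by (rule Henstock_Kurzweil_Integration.integral_combine) (use True int in auto)
    moreover have "integral {a - 1..a} h + integral {a..b - 1} h = integral {a - 1..b - 1} h"
      by (rule Henstock_Kurzweil_Integration.integral_combine) (use True int in auto)
    ultimately show ?thesis using True by simp
  qed simp
  also have "\<dots> = integral {max a (b - 1)..b} (\<lambda>t. h t - h (a + b - 1 - t))"
    using int int_reflected integral_reflect_shift_real[of "max a (b - 1)" b h "a + b - 1"]
    by (simp add: integral_diff)
  finally show ?thesis .
qed

lemma integral_telescoping_nonneg:
  fixes h :: "real \<Rightarrow> real"
  assumes cont: "continuous_on UNIV h"
    and upper_half: "\<And>t. max a (b - 1) \<le> t \<Longrightarrow> t \<le> b \<Longrightarrow> h (a + b - 1 - t) \<le> h t"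
  shows "0 \<le> integral {a..b} (\<lambda>s. h s - h (s - 1))"
proof (cases "a \<le> b")
  case True
  have "0 \<le> integral {max a (b - 1)..b} (\<lambda>t. h t - h (a + b - 1 - t))"
    by (intro integral_nonneg integrable_on_interval_if_continuous continuous_intros
        continuous_on_compose2[OF cont] cont) (auto simp: upper_half)
  with True show ?thesis by (simp add: integral_telescoping_reflect[OF cont])
qed simp

lemma integral_telescoping_nonpos:
  fixes h :: "real \<Rightarrow> real"
  assumes "continuous_on UNIV h"
    and "\<And>t. max a (b - 1) \<le> t \<Longrightarrow> t \<le> b \<Longrightarrow> h t \<le> h (a + b - 1 - t)"
  shows "0 \<le> integral {a..b} (\<lambda>s. h (s - 1) - h s)"
  using integral_telescoping_nonneg[of "\<lambda>x. - h x" a b] assms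
  by (simp add: continuous_on_minus)

lemma integral_le_iff_integral_diff_nonneg:
  fixes f g :: "real \<Rightarrow> real"
  assumes "continuous_on {a..b} f" "continuous_on {a..b} g"
  shows "integral {a..b} g \<le> integral {a..b} f \<longleftrightarrow> 0 \<le> integral {a..b} (\<lambda>s. f s - g s)"
  using assms by (simp add: integral_diff integrable_continuous_interval)

lemma rGamma_nonneg: "(x::real) \<ge> 0 \<Longrightarrow> rGamma x \<ge> 0"
  by (cases "x = 0") (auto simp: rGamma_inverse_Gamma less_le)

lemma rbinom_pascal:
  assumes "a > 0"
  shows "rbinom a x = rbinom (a - 1) x + rbinom (a - 1) (x - 1)"
proof -
  have Gamma_a: "Gamma (1 + a) = a * Gamma a"
    using assms Gamma_plus1[of a] by (simp add: add.commute nonpos_Ints_def)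
  have rGamma_a_x: "rGamma (a - x) = (a - x) * rGamma (a - x + 1)"
    and rGamma_x: "rGamma x = x * rGamma (x + 1)"
    using rGamma_plus1[of "a - x"] rGamma_plus1[of x] by simp_all
  show ?thesis
    unfolding rbinom_def by (simp add: Gamma_a rGamma_a_x rGamma_x algebra_simps)
qed

lemma rbinom_swap_diff:
  "rbinom a u * rbinom (a - 1) v - rbinom a v * rbinom (a - 1) u
   = Gamma (a + 1) * Gamma a * rGamma (u + 1) * rGamma (v + 1) * rGamma (a - u + 1)
     * rGamma (a - v + 1) * (u - v)"
proof -
  have rGamma_u: "rGamma (a - u) = (a - u) * rGamma (a - u + 1)"
    and rGamma_v: "rGamma (a - v) = (a - v) * rGamma (a - v + 1)"
    using rGamma_plus1[of "a - u"] rGamma_plus1[of "a - v"] by simp_all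
  show ?thesis unfolding rbinom_def by (simp add: rGamma_u rGamma_v algebra_simps)
qed

lemma rbinom_shifted_swap_diff:
  "rbinom a (u + 1) * rbinom (a - 1) v - rbinom a (v + 1) * rbinom (a - 1) u
   = Gamma (a + 1) * Gamma a * rGamma (u + 2) * rGamma (v + 2) * rGamma (a - u)
     * rGamma (a - v) * (v - u)"
proof -
  have rGamma_u: "rGamma (1 + u) = (u + 1) * rGamma (u + 2)"
    and rGamma_v: "rGamma (1 + v) = (v + 1) * rGamma (v + 2)"
    using rGamma_plus1[of "u + 1"] rGamma_plus1[of "v + 1"] by (simp_all add: add_ac)
  show ?thesis unfolding rbinom_def by (simp add: rGamma_u rGamma_v algebra_simps)
qed

lemma rbinom_swap_le:
  assumes "a > 0" "-1 \<le> v" "v \<le> u" "u \<le> a + 1"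
  shows "rbinom a v * rbinom (a - 1) u \<le> rbinom a u * rbinom (a - 1) v"
proof -
  have "0 \<le> Gamma (a + 1) * Gamma a * rGamma (u + 1) * rGamma (v + 1) * rGamma (a - u + 1)
            * rGamma (a - v + 1) * (u - v)"
    using assms Gamma_real_pos[of a] Gamma_real_pos[of "a + 1"]
    by (intro mult_nonneg_nonneg rGamma_nonneg) auto
  then show ?thesis using rbinom_swap_diff[of a u v] by simp
qed

lemma rbinom_shifted_swap_le:
  assumes "a > 0" "-2 \<le> u" "u \<le> v" "v \<le> a"
  shows "rbinom a (v + 1) * rbinom (a - 1) u \<le> rbinom a (u + 1) * rbinom (a - 1) v"
proof -
  have "0 \<le> Gamma (a + 1) * Gamma a * rGamma (u + 2) * rGamma (v + 2) * rGamma (a - u)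
            * rGamma (a - v) * (v - u)"
    using assms Gamma_real_pos[of a] Gamma_real_pos[of "a + 1"]
    by (intro mult_nonneg_nonneg rGamma_nonneg) auto
  then show ?thesis using rbinom_shifted_swap_diff[of a u v] by simp
qed

lemma balanced_rbinom_integral_ge:
  assumes "M > 1" "a + b = n" "0 \<le> a" "b \<le> M"
  shows "integral {a..b} (\<lambda>s. rbinom M s * rbinom (M - 2) (n - s))
       \<le> integral {a..b} (\<lambda>s. rbinom (M - 1) s * rbinom (M - 1) (n - s))"
proof -
  define h where "h x = rbinom (M - 1) x * rbinom (M - 2) (n - 1 - x)" for x
  have "rbinom (M - 1) s * rbinom (M - 1) (n - s) - rbinom M s * rbinom (M - 2) (n - s)
        = h s - h (s - 1)" for s
    using rbinom_pascal[of M s] rbinom_pascal[of "M - 1" "n - s"] assms(1)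
    by (simp add: h_def algebra_simps)
  moreover have "0 \<le> integral {a..b} (\<lambda>s. h s - h (s - 1))"
  proof (rule integral_telescoping_nonneg)
    show "continuous_on UNIV h" unfolding h_def by (intro continuous_intros)
    fix t assume "max a (b - 1) \<le> t" "t \<le> b"
    then show "h (a + b - 1 - t) \<le> h t"
      using rbinom_swap_le[of "M - 1" "n - 1 - t" t] assms by (simp add: h_def)
  qed
  ultimately show ?thesis
    by (subst integral_le_iff_integral_diff_nonneg) (simp_all add: continuous_intros)
qed

lemma balanced_rbinom_integral_le:
  assumes "M > 1" "a + b = n + 1" "0 \<le> a" "b \<le> M"
  shows "integral {a..b} (\<lambda>s. rbinom (M - 1) s * rbinom (M - 1) (n - s))
       \<le> integral {a..b} (\<lambda>s. rbinom M s * rbinom (M - 2) (n - s))"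
proof -
  define h where "h x = rbinom (M - 1) x * rbinom (M - 2) (n - 1 - x)" for x
  have "rbinom M s * rbinom (M - 2) (n - s) - rbinom (M - 1) s * rbinom (M - 1) (n - s)
        = h (s - 1) - h s" for s
    using rbinom_pascal[of M s] rbinom_pascal[of "M - 1" "n - s"] assms(1)
    by (simp add: h_def algebra_simps)
  moreover have "0 \<le> integral {a..b} (\<lambda>s. h (s - 1) - h s)"
  proof (rule integral_telescoping_nonpos)
    show "continuous_on UNIV h" unfolding h_def by (intro continuous_intros)
    fix t assume "max a (b - 1) \<le> t" "t \<le> b"
    then show "h t \<le> h (a + b - 1 - t)"
      using rbinom_shifted_swap_le[of "M - 1" "n - 1 - t" "t - 1"] assms by (simp add: h_def)
  qed
  ultimately show ?thesis
    by (subst integral_le_iff_integral_diff_nonneg) (simp_all add: continuous_intros)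
qed

lemma balanced_rbinom_integral_ge_shifted:
  assumes "M > 1" "a + b = n" "-1 \<le> a" "b \<le> M - 1"
  shows "integral {a..b} (\<lambda>s. rbinom M (s + 1) * rbinom (M - 2) (n - s - 1))
       \<le> integral {a..b} (\<lambda>s. rbinom (M - 1) s * rbinom (M - 1) (n - s))"
proof -
  define h where "h x = rbinom (M - 1) (x + 1) * rbinom (M - 2) (n - 1 - x)" for x
  have "rbinom (M - 1) s * rbinom (M - 1) (n - s) - rbinom M (s + 1) * rbinom (M - 2) (n - s - 1)
        = h (s - 1) - h s" for s
    using rbinom_pascal[of M "s + 1"] rbinom_pascal[of "M - 1" "n - s"] assms(1)
    by (simp add: h_def algebra_simps)
  moreover have "0 \<le> integral {a..b} (\<lambda>s. h (s - 1) - h s)"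
  proof (rule integral_telescoping_nonpos)
    show "continuous_on UNIV h" unfolding h_def by (intro continuous_intros)
    fix t assume "max a (b - 1) \<le> t" "t \<le> b"
    then show "h t \<le> h (a + b - 1 - t)"
      using rbinom_shifted_swap_le[of "M - 1" "n - 1 - t" t] assms by (simp add: h_def)
  qed
  ultimately show ?thesis
    by (subst integral_le_iff_integral_diff_nonneg) (simp_all add: continuous_intros)
qed

theorem lemma2:
  fixes M q n :: real
  assumes "M > 1" and "q > 0" and "n > -2"
  defines "A \<equiv> {s::real. \<bar>s - (n - s)\<bar> \<le> q \<and> 0 \<le> s \<and> s \<le> M \<and> 0 \<le> n - s \<and> n - s \<le> M}"
    and "B \<equiv> {s::real. \<bar>s - (n + 1 - s)\<bar> \<le> q \<and> 0 \<le> s \<and> s \<le> M \<and> 0 \<le> n + 1 - s \<and> n + 1 - s \<le> M}"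
    and "C \<equiv> {s::real. \<bar>s - (n - s)\<bar> \<le> q \<and> 0 \<le> s + 1 \<and> s + 1 \<le> M \<and> 0 \<le> n + 1 - s \<and> n + 1 - s \<le> M}"
  shows "integral A (\<lambda>s. rbinom (M - 1) s * rbinom (M - 1) (n - s))
           \<ge> integral A (\<lambda>s. rbinom M s * rbinom (M - 2) (n - s))
    \<and> integral B (\<lambda>s. rbinom (M - 1) s * rbinom (M - 1) (n - s))
           \<le> integral B (\<lambda>s. rbinom M s * rbinom (M - 2) (n - s))
    \<and> integral C (\<lambda>s. rbinom (M - 1) s * rbinom (M - 1) (n - s))
           \<ge> integral C (\<lambda>s. rbinom M (s + 1) * rbinom (M - 2) (n - s - 1))"
proof -
  have A_eq: "A = {max (max ((n - q) / 2) 0) (n - M)..min (min ((n + q) / 2) M) n}"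
    unfolding A_def by (auto simp: abs_le_iff)
  have B_eq: "B = {max (max ((n + 1 - q) / 2) 0) (n + 1 - M)..min (min ((n + 1 + q) / 2) M) (n + 1)}"
    unfolding B_def by (auto simp: abs_le_iff)
  have C_eq: "C = {max (max ((n - q) / 2) (-1)) (n + 1 - M)..min (min ((n + q) / 2) (M - 1)) (n + 1)}"
    unfolding C_def by (auto simp: abs_le_iff)
  have "integral A (\<lambda>s. rbinom M s * rbinom (M - 2) (n - s))
      \<le> integral A (\<lambda>s. rbinom (M - 1) s * rbinom (M - 1) (n - s))"
    unfolding A_eq by (rule balanced_rbinom_integral_ge)
      (use \<open>M > 1\<close> in \<open>auto simp: max_def min_def field_simps\<close>)
  moreover have "integral B (\<lambda>s. rbinom (M - 1) s * rbinom (M - 1) (n - s))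
      \<le> integral B (\<lambda>s. rbinom M s * rbinom (M - 2) (n - s))"
    unfolding B_eq by (rule balanced_rbinom_integral_le)
      (use \<open>M > 1\<close> in \<open>auto simp: max_def min_def field_simps\<close>)
  moreover have "integral C (\<lambda>s. rbinom M (s + 1) * rbinom (M - 2) (n - s - 1))
      \<le> integral C (\<lambda>s. rbinom (M - 1) s * rbinom (M - 1) (n - s))"
    unfolding C_eq by (rule balanced_rbinom_integral_ge_shifted)
      (use \<open>M > 1\<close> in \<open>auto simp: max_def min_def field_simps\<close>)
  ultimately show ?thesis by simp
qed

end
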